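(* The point $C_2=C_2(u)=\left(-\frac{a^2+b^2}{2a}\cos u,-\frac{a^2+b^2}{2b}\sin u\right)$ lies on $\mathcal{E}$ if and only if it equals one of the four points $$W=\frac{1}{2\sqrt{a^2+b^2}}\left(\pm a\sqrt{a^2+3b^2},\;\pm b\sqrt{3a^2+b^2}\right)$$ (all sign combinations). Moreover, whenever $C_2\in\mathcal{E}$, $C_2$ coincides with one of the points $P_1,P_2,P_3$.
   Context: Let $a>b>0$. Let $\mathcal{E}$ be the ellipse $x^2/a^2+y^2/b^2=1$, parametrized by $P(t)=(a\cos t,b\sin t)$. For $u\in\mathbb{R}$ let $M=(a\cos u,b\sin u)$, and for $i=1,2,3$ let $t_i=-u/3-2\pi(i-1)/3$ and $P_i=P(t_i)$ (the pre-images of the cusps of the negative pedal curve of $\mathcal{E}$ with respect to $M$). $C_2$ is the area centroid of that negative pedal curve. *)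

theory Defs
  imports Complex_Main
begin

definition on_ellipse :: "real \<Rightarrow> real \<Rightarrow> real \<times> real \<Rightarrow> bool" where
  "on_ellipse a b p \<longleftrightarrow> (fst p)^2 / a^2 + (snd p)^2 / b^2 = 1"

definition ellP :: "real \<Rightarrow> real \<Rightarrow> real \<Rightarrow> real \<times> real" where
  "ellP a b t = (a * cos t, b * sin t)"

text \<open>Cusp pre-image parameters t_i = -u/3 - 2 pi (i-1)/3, i = 1,2,3.\<close>
definition cusp_param :: "real \<Rightarrow> nat \<Rightarrow> real" where
  "cusp_param u i = - u / 3 - 2 * pi * (real i - 1) / 3"

text \<open>Area centroid C_2 of the negative pedal curve, as given by its closed form.\<close>
definition C2 :: "real \<Rightarrow> real \<Rightarrow> real \<Rightarrow> real \<times> real" where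
  "C2 a b u = (- (a^2 + b^2) / (2 * a) * cos u, - (a^2 + b^2) / (2 * b) * sin u)"

definition W_points :: "real \<Rightarrow> real \<Rightarrow> (real \<times> real) set" where
  "W_points a b = {(sx * a * sqrt (a^2 + 3 * b^2) / (2 * sqrt (a^2 + b^2)),
                     sy * b * sqrt (3 * a^2 + b^2) / (2 * sqrt (a^2 + b^2))) | sx sy.
                     sx \<in> {1, -1} \<and> sy \<in> {1, -1}}"

end

theory Submission
  imports Defs
begin

text \<open>
  Since \<open>cos\<^sup>2 u + sin\<^sup>2 u = 1\<close>, the centroid \<open>C\<^sub>2 = (x, y)\<close> always satisfies
  \<open>a\<^sup>2 x\<^sup>2 + b\<^sup>2 y\<^sup>2 = (a\<^sup>2 + b\<^sup>2)\<^sup>2 / 4\<close>. Together with the ellipse equation this is a linear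
  system in \<open>(x\<^sup>2, y\<^sup>2)\<close> with determinant a multiple of \<open>a\<^sup>4 - b\<^sup>4 \<noteq> 0\<close>; its unique
  solution is the pair of squared coordinates of the points \<open>W\<close>.
  If \<open>C\<^sub>2 = P(t)\<close> lies on the ellipse, then \<open>cos u = -2a\<^sup>2 cos t / (a\<^sup>2 + b\<^sup>2)\<close>,
  \<open>sin u = -2b\<^sup>2 sin t / (a\<^sup>2 + b\<^sup>2)\<close> and \<open>cos\<^sup>2 t = (a\<^sup>2 + 3b\<^sup>2) / (4(a\<^sup>2 + b\<^sup>2))\<close>, and the
  triple-angle formulas turn these into \<open>cos 3t = cos u\<close>, \<open>sin 3t = - sin u\<close>. Hence
  \<open>3t \<equiv> -u (mod 2\<pi>)\<close>, i.e. \<open>t\<close> is one of the \<open>t\<^sub>i\<close> modulo \<open>2\<pi>\<close>.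
\<close>

lemma sin_treble_sin: "sin (3 * x) = 3 * sin x - 4 * (sin x :: real) ^ 3"
proof -
  have "sin (3 * x) = sin (2 * x + x)" by simp
  also have "\<dots> = sin (2 * x) * cos x + cos (2 * x) * sin x" by (rule sin_add)
  also have "\<dots> = sin x * (3 * cos x ^ 2 - sin x ^ 2)"
    by (simp only: sin_double cos_double) (simp add: power2_eq_square algebra_simps)
  also have "\<dots> = 3 * sin x - 4 * sin x ^ 3"
    by (subst cos_squared_eq) (simp add: power2_eq_square power3_eq_cube algebra_simps)
  finally show ?thesis .
qed

lemma mem_sign_pairs_iff_squares:
  fixes A B :: real
  shows "p \<in> {(sx * A, sy * B) | sx sy. sx \<in> {1, -1} \<and> sy \<in> {1, -1}}
    \<longleftrightarrow> (fst p)^2 = A^2 \<and> (snd p)^2 = B^2"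
proof
  assume "(fst p)^2 = A^2 \<and> (snd p)^2 = B^2"
  then have "(fst p = A \<or> fst p = - A) \<and> (snd p = B \<or> snd p = - B)"
    by (simp add: power2_eq_iff)
  then show "p \<in> {(sx * A, sy * B) | sx sy. sx \<in> {1, -1} \<and> sy \<in> {1, -1}}"
    by (cases p) force
qed auto

lemma W_points_iff_squares:
  "p \<in> W_points a b \<longleftrightarrow>
     (fst p)^2 = a^2 * (a^2 + 3 * b^2) / (4 * (a^2 + b^2)) \<and>
     (snd p)^2 = b^2 * (3 * a^2 + b^2) / (4 * (a^2 + b^2))"
proof -
  define A where "A = a * sqrt (a^2 + 3 * b^2) / (2 * sqrt (a^2 + b^2))"
  define B where "B = b * sqrt (3 * a^2 + b^2) / (2 * sqrt (a^2 + b^2))"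
  have "W_points a b = {(sx * A, sy * B) | sx sy. sx \<in> {1, -1} \<and> sy \<in> {1, -1}}"
    unfolding W_points_def A_def B_def by (simp add: mult.assoc)
  moreover have "A^2 = a^2 * (a^2 + 3 * b^2) / (4 * (a^2 + b^2))"
    by (simp add: A_def power_divide power_mult_distrib)
  moreover have "B^2 = b^2 * (3 * a^2 + b^2) / (4 * (a^2 + b^2))"
    by (simp add: B_def power_divide power_mult_distrib)
  ultimately show ?thesis
    by (simp only: mem_sign_pairs_iff_squares)
qed

lemma on_ellipse_iff_ellP:
  assumes "a \<noteq> 0" "b \<noteq> 0"
  shows "on_ellipse a b p \<longleftrightarrow> (\<exists>t. p = ellP a b t)"
proof
  assume "on_ellipse a b p"
  then have "(fst p / a)^2 + (snd p / b)^2 = 1"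
    by (simp add: on_ellipse_def power_divide)
  then obtain t where "fst p / a = cos t" "snd p / b = sin t"
    by (rule sincos_total_2pi)
  then show "\<exists>t. p = ellP a b t"
    using assms by (auto simp: ellP_def prod_eq_iff field_simps)
qed (use assms in \<open>auto simp: on_ellipse_def ellP_def power_mult_distrib\<close>)

lemma C2_pedal_relation:
  assumes "a \<noteq> 0" "b \<noteq> 0"
  shows "a^2 * (fst (C2 a b u))^2 + b^2 * (snd (C2 a b u))^2 = (a^2 + b^2)^2 / 4"
proof -
  have "a^2 * (fst (C2 a b u))^2 = (a^2 + b^2)^2 / 4 * (cos u)^2"
    using assms by (simp add: C2_def power_mult_distrib power_divide flip: minus_add_distrib)
  moreover have "b^2 * (snd (C2 a b u))^2 = (a^2 + b^2)^2 / 4 * (sin u)^2"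
    using assms by (simp add: C2_def power_mult_distrib power_divide flip: minus_add_distrib)
  ultimately show ?thesis
    by (simp flip: distrib_left)
qed

lemma on_ellipse_iff_squares:
  fixes a b :: real
  assumes "a > b" "b > 0"
    and pedal: "a^2 * (fst p)^2 + b^2 * (snd p)^2 = (a^2 + b^2)^2 / 4"
  shows "on_ellipse a b p \<longleftrightarrow>
     (fst p)^2 = a^2 * (a^2 + 3 * b^2) / (4 * (a^2 + b^2)) \<and>
     (snd p)^2 = b^2 * (3 * a^2 + b^2) / (4 * (a^2 + b^2))"
proof -
  have "b^4 < a^4"
    using assms(1,2) by (simp add: power_strict_mono)
  then have D: "a^4 - b^4 \<noteq> 0"
    by simp
  \<comment> \<open>Keeping \<open>1 / (4 (a\<^sup>2 + b\<^sup>2))\<close> as an opaque factor makes the identities below polynomial.\<close>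
  define K where "K = inverse (4 * (a^2 + b^2))"
  have "4 * (a^2 + b^2) > 0"
    using assms(2) by (intro mult_pos_pos add_nonneg_pos) simp_all
  then have K: "4 * (a^2 + b^2) * K = 1"
    unfolding K_def by (intro right_inverse) (metis less_irrefl)
  define X\<^sub>0 where "X\<^sub>0 = a^2 * (a^2 + 3 * b^2) * K"
  define Y\<^sub>0 where "Y\<^sub>0 = b^2 * (3 * a^2 + b^2) * K"
  define X where "X = (fst p)^2 - X\<^sub>0"
  define Y where "Y = (snd p)^2 - Y\<^sub>0"
  have "b^2 * X\<^sub>0 + a^2 * Y\<^sub>0 = a^2 * b^2 * (4 * (a^2 + b^2) * K)"
    unfolding X\<^sub>0_def Y\<^sub>0_def by (simp add: algebra_simps)
  then have "b^2 * X + a^2 * Y = b^2 * (fst p)^2 + a^2 * (snd p)^2 - a^2 * b^2"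
    unfolding X_def Y_def K by (simp add: algebra_simps)
  moreover have "on_ellipse a b p \<longleftrightarrow> a^2 * b^2 = b^2 * (fst p)^2 + a^2 * (snd p)^2"
    using assms(1,2) unfolding on_ellipse_def by (simp add: field_simps)
  ultimately have ell: "on_ellipse a b p \<longleftrightarrow> b^2 * X + a^2 * Y = 0"
    by auto
  have "a^2 * X\<^sub>0 + b^2 * Y\<^sub>0 = (a^2 + b^2)^2 / 4 * (4 * (a^2 + b^2) * K)"
    unfolding X\<^sub>0_def Y\<^sub>0_def by (simp add: algebra_simps power2_eq_square)
  then have pedal0: "a^2 * X + b^2 * Y = 0"
    using pedal unfolding X_def Y_def K by (simp add: algebra_simps)
  have "b^2 * X + a^2 * Y = 0 \<longleftrightarrow> X = 0 \<and> Y = 0"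
  proof
    assume ell0: "b^2 * X + a^2 * Y = 0"
    have "(a^4 - b^4) * X = a^2 * (a^2 * X + b^2 * Y) - b^2 * (b^2 * X + a^2 * Y)"
      by (simp add: algebra_simps power2_eq_square power4_eq_xxxx)
    then have "X = 0" using pedal0 ell0 D by simp
    then show "X = 0 \<and> Y = 0" using pedal0 assms(2) by simp
  qed simp
  then show ?thesis
    unfolding ell X_def Y_def X\<^sub>0_def Y\<^sub>0_def K_def by (simp add: divide_inverse)
qed

lemma ellP_add_2pi_int: "ellP a b (t + 2 * pi * of_int m) = ellP a b t"
  by (simp add: ellP_def cos_add sin_add)

lemma cusp_param_cover:
  assumes "cos (3 * t) = cos u" "sin (3 * t) = - sin u"
  obtains i m where "i \<in> {1, 2, 3}" "t = cusp_param u i + 2 * pi * of_int m"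
proof -
  obtain k :: int where k: "3 * t = - u + 2 * pi * k"
    using assms sin_cos_eq_iff[of "3 * t" "- u"] by auto
  define r where "r = (- k) mod 3"
  define q where "q = (- k) div 3"
  have r: "r \<in> {0, 1, 2}"
    unfolding r_def by auto
  have "- k = 3 * q + r"
    unfolding q_def r_def by simp
  then have "real_of_int k = - 3 * of_int q - of_int r"
    by linarith
  with k have "3 * t = - u - 2 * pi * of_int r - 6 * pi * of_int q"
    by (simp add: algebra_simps)
  moreover have "real (nat r + 1) - 1 = of_int r"
    using r by auto
  ultimately have "t = cusp_param u (nat r + 1) + 2 * pi * of_int (- q)"
    unfolding cusp_param_def by (simp add: field_simps)
  moreover have "nat r + 1 \<in> {1, 2, 3}"
    using r by auto
  ultimately show ?thesis
    using that by blast
qed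

lemma C2_on_ellipse_imp_cusp:
  fixes a b u :: real
  assumes "a > b" "b > 0" and on: "on_ellipse a b (C2 a b u)"
  shows "\<exists>i\<in>{1, 2, 3}. C2 a b u = ellP a b (cusp_param u i)"
proof -
  define S where "S = a^2 + b^2"
  have "a > 0" "S > 0"
    using assms(1,2) unfolding S_def by (simp_all add: add_pos_pos)
  obtain t where t: "C2 a b u = ellP a b t"
    using on_ellipse_iff_ellP[of a b "C2 a b u"] on \<open>a > 0\<close> assms(2) by auto
  then have "a * cos t = - S / (2 * a) * cos u" "b * sin t = - S / (2 * b) * sin u"
    unfolding C2_def ellP_def S_def by simp_all
  then have cos_u: "cos u = cos t * (- 2 * a^2 / S)" and sin_u: "sin u = sin t * (- 2 * b^2 / S)"
    using \<open>a > 0\<close> \<open>S > 0\<close> assms(2) by (simp_all add: field_simps power2_eq_square)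
  have "(fst (C2 a b u))^2 = a^2 * (a^2 + 3 * b^2) / (4 * S)"
    using on_ellipse_iff_squares[OF assms(1,2) C2_pedal_relation] on \<open>a > 0\<close> assms(2)
    unfolding S_def by simp
  then have "a^2 * (cos t)^2 = a^2 * ((a^2 + 3 * b^2) / (4 * S))"
    using t by (simp add: ellP_def power_mult_distrib)
  then have cos2: "(cos t)^2 = (a^2 + 3 * b^2) / (4 * S)"
    using \<open>a > 0\<close> by (metis mult_left_cancel power_not_zero less_irrefl)
  have "cos (3 * t) = cos t * (4 * (cos t)^2 - 3)"
    unfolding cos_treble_cos by (simp add: power2_eq_square power3_eq_cube algebra_simps)
  also have "4 * (cos t)^2 - 3 = (a^2 + 3 * b^2 - 3 * S) / S"
    using \<open>S > 0\<close> unfolding cos2 by (simp add: field_simps)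
  also have "a^2 + 3 * b^2 - 3 * S = - 2 * a^2"
    unfolding S_def by simp
  finally have "cos (3 * t) = cos u"
    using cos_u by simp
  have "sin (3 * t) = sin t * (4 * (cos t)^2 - 1)"
    unfolding sin_treble_sin cos_squared_eq by (simp add: power2_eq_square power3_eq_cube algebra_simps)
  also have "4 * (cos t)^2 - 1 = (a^2 + 3 * b^2 - S) / S"
    using \<open>S > 0\<close> unfolding cos2 by (simp add: field_simps)
  also have "a^2 + 3 * b^2 - S = 2 * b^2"
    unfolding S_def by simp
  finally have "sin (3 * t) = - sin u"
    using sin_u by simp
  then obtain i m where "i \<in> {1, 2, 3}" "t = cusp_param u i + 2 * pi * of_int m"
    using cusp_param_cover \<open>cos (3 * t) = cos u\<close> by metis
  then show ?thesis
    using t ellP_add_2pi_int by metis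
qed

theorem proposition6p1:
  fixes a b u :: real
  assumes "a > b" and "b > 0"
  shows "(on_ellipse a b (C2 a b u) \<longleftrightarrow> C2 a b u \<in> W_points a b)
    \<and> (on_ellipse a b (C2 a b u) \<longrightarrow>
         (\<exists>i\<in>{1, 2, 3}. C2 a b u = ellP a b (cusp_param u i)))"
  using on_ellipse_iff_squares[OF assms C2_pedal_relation] W_points_iff_squares
    C2_on_ellipse_imp_cusp[OF assms] assms
  by auto

end
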